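(* For every tetrahedral erasure channel $W$, $A(W^{s})+A(W^{p})\le A(W)$.
   Context: $\mathrm{TEC}(p,q,r,s,t)$ denotes a tetrahedral erasure channel with parameters $p,q,r,s,t\ge0$ summing to $1$; its moment of inertia is $A=(q-r)^2+(r-s)^2+(s-q)^2$. For $W=\mathrm{TEC}(p,q,r,s,t)$, the serial child is $W^{s}=\mathrm{TEC}(p^2,\ ps+sq+qp,\ pq+qr+rp,\ pr+rs+sp,\ 1-\text{(sum of the other four)})$ and the parallel child is $W^{p}=\mathrm{TEC}(1-\text{(sum of the other four)},\ ts+sq+qt,\ tq+qr+rt,\ tr+rs+st,\ t^2)$. *)

theory Defs
  imports Main "HOL.Real"
begin

record tec =
  tp :: real
  tq :: real
  tr :: real
  ts :: real
  tt :: real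

definition is_TEC :: "tec \<Rightarrow> bool" where
  "is_TEC W \<longleftrightarrow> tp W \<ge> 0 \<and> tq W \<ge> 0 \<and> tr W \<ge> 0 \<and> ts W \<ge> 0 \<and> tt W \<ge> 0
     \<and> tp W + tq W + tr W + ts W + tt W = 1"

definition TEC :: "real \<Rightarrow> real \<Rightarrow> real \<Rightarrow> real \<Rightarrow> real \<Rightarrow> tec" where
  "TEC p q r s t = \<lparr>tp = p, tq = q, tr = r, ts = s, tt = t\<rparr>"

definition inertia :: "tec \<Rightarrow> real" where
  "inertia W = (tq W - tr W)^2 + (tr W - ts W)^2 + (ts W - tq W)^2"

definition serial_child :: "tec \<Rightarrow> tec" where
  "serial_child W = (let p = tp W; q = tq W; r = tr W; s = ts W;
      p' = p^2; q' = p*s + s*q + q*p; r' = p*q + q*r + r*p; s' = p*r + r*s + s*p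
    in TEC p' q' r' s' (1 - (p' + q' + r' + s')))"

definition parallel_child :: "tec \<Rightarrow> tec" where
  "parallel_child W = (let q = tq W; r = tr W; s = ts W; t = tt W;
      q' = t*s + s*q + q*t; r' = t*q + q*r + r*t; s' = t*r + r*s + s*t; t' = t^2
    in TEC (1 - (q' + r' + s' + t')) q' r' s' t')"

end

theory Submission
  imports Defs
begin

text \<open>Both children have a moment of inertia of the same shape: the differences of their
  parameters factor as \<open>q' - r' = (p + q) (s - r)\<close> and cyclically (with \<open>t\<close> in place of \<open>p\<close> for
  the parallel child), so with \<open>d\<^sub>q = s - r\<close>, \<open>d\<^sub>r = q - s\<close>, \<open>d\<^sub>s = r - q\<close> the claim is
  \<open>\<Sum> ((p + x)\<^sup>2 + (t + x)\<^sup>2) d\<^sub>x\<^sup>2 \<le> \<Sum> d\<^sub>x\<^sup>2\<close>. Writing \<open>u = p + t\<close> and \<open>T = q + r + s = 1 - u\<close>,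
  each coefficient is at most \<open>u\<^sup>2 + 2 u x + 2 x\<^sup>2\<close>, and comparing with \<open>(u + T)\<^sup>2 = 1\<close> term by
  term in \<open>u\<close>, only \<open>2 \<Sum> x\<^sup>2 d\<^sub>x\<^sup>2 \<le> T\<^sup>2 \<Sum> d\<^sub>x\<^sup>2\<close> is not immediate; its defect is twice
  Schur's quartic form plus \<open>2 (qr + rs + sq) \<Sum> d\<^sub>x\<^sup>2\<close>.\<close>

lemma schur_quartic_nonneg:
  fixes x y z :: real
  shows "0 \<le> x^2 * (x - y) * (x - z) + y^2 * (y - z) * (y - x) + z^2 * (z - x) * (z - y)"
proof -
  have "x^2 * (x - y) * (x - z) + y^2 * (y - z) * (y - x) + z^2 * (z - x) * (z - y)
      = ((x - y)^2 * (x + y - z)^2 + (y - z)^2 * (y + z - x)^2 + (z - x)^2 * (z + x - y)^2) / 2"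
    by algebra
  also have "\<dots> \<ge> 0" by simp
  finally show ?thesis .
qed

lemma weighted_square_diffs_le:
  fixes q r s :: real
  assumes "q \<ge> 0" "r \<ge> 0" "s \<ge> 0"
  shows "2 * (q^2 * (s - r)^2 + r^2 * (q - s)^2 + s^2 * (r - q)^2)
    \<le> (q + r + s)^2 * ((s - r)^2 + (q - s)^2 + (r - q)^2)"
proof -
  have "(q + r + s)^2 * ((s - r)^2 + (q - s)^2 + (r - q)^2)
      - 2 * (q^2 * (s - r)^2 + r^2 * (q - s)^2 + s^2 * (r - q)^2)
      = 2 * (q^2 * (q - r) * (q - s) + r^2 * (r - s) * (r - q) + s^2 * (s - q) * (s - r))
        + 2 * (q * r + r * s + s * q) * ((s - r)^2 + (q - s)^2 + (r - q)^2)"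
    by algebra
  also have "\<dots> \<ge> 0"
    using schur_quartic_nonneg[of q r s] assms by simp
  finally show ?thesis by simp
qed

lemma sum_sq_shift_le:
  fixes p t x :: real
  assumes "p \<ge> 0" "t \<ge> 0"
  shows "(p + x)^2 + (t + x)^2 \<le> (p + t + x)^2 + x^2"
proof -
  have "(p + t + x)^2 + x^2 - ((p + x)^2 + (t + x)^2) = 2 * p * t" by algebra
  also have "\<dots> \<ge> 0" using assms by simp
  finally show ?thesis by simp
qed

lemma children_inertia_sum_le:
  fixes p q r s t :: real
  assumes nonneg: "p \<ge> 0" "q \<ge> 0" "r \<ge> 0" "s \<ge> 0" "t \<ge> 0" and total: "p + q + r + s + t = 1"
  shows "((p + q)^2 + (t + q)^2) * (s - r)^2 + ((p + r)^2 + (t + r)^2) * (q - s)^2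
      + ((p + s)^2 + (t + s)^2) * (r - q)^2 \<le> (s - r)^2 + (q - s)^2 + (r - q)^2"
proof -
  define u where "u = p + t"
  define T where "T = q + r + s"
  define D where "D = (s - r)^2 + (q - s)^2 + (r - q)^2"
  have u_nonneg: "u \<ge> 0" and u_T: "u + T = 1"
    using nonneg total by (simp_all add: u_def T_def)
  have shift: "((p + x)^2 + (t + x)^2) * d^2 \<le> ((u + x)^2 + x^2) * d^2" for x d
    unfolding u_def using sum_sq_shift_le[OF nonneg(1,5)] by (simp add: mult_right_mono)
  have "((p + q)^2 + (t + q)^2) * (s - r)^2 + ((p + r)^2 + (t + r)^2) * (q - s)^2
      + ((p + s)^2 + (t + s)^2) * (r - q)^2
      \<le> ((u + q)^2 + q^2) * (s - r)^2 + ((u + r)^2 + r^2) * (q - s)^2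
      + ((u + s)^2 + s^2) * (r - q)^2"
    by (intro add_mono shift)
  also have "\<dots> = u^2 * D + 2 * u * (q * (s - r)^2 + r * (q - s)^2 + s * (r - q)^2)
      + 2 * (q^2 * (s - r)^2 + r^2 * (q - s)^2 + s^2 * (r - q)^2)"
    unfolding D_def by algebra
  also have "\<dots> \<le> u^2 * D + 2 * u * (T * D) + T^2 * D"
  proof -
    have "q * (s - r)^2 + r * (q - s)^2 + s * (r - q)^2 \<le> T * D"
      unfolding T_def D_def using nonneg by (simp add: algebra_simps)
    then have "u * (q * (s - r)^2 + r * (q - s)^2 + s * (r - q)^2) \<le> u * (T * D)"
      using u_nonneg by (rule mult_left_mono)
    moreover have "2 * (q^2 * (s - r)^2 + r^2 * (q - s)^2 + s^2 * (r - q)^2) \<le> T^2 * D"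
      unfolding T_def D_def using weighted_square_diffs_le nonneg by blast
    ultimately show ?thesis by linarith
  qed
  also have "\<dots> = (u + T)^2 * D" by algebra
  finally show ?thesis using u_T by (simp add: D_def)
qed

lemma inertia_serial_child:
  "inertia (serial_child W) = (tp W + tq W)^2 * (ts W - tr W)^2
    + (tp W + tr W)^2 * (tq W - ts W)^2 + (tp W + ts W)^2 * (tr W - tq W)^2"
  unfolding serial_child_def inertia_def TEC_def Let_def by simp algebra

lemma inertia_parallel_child:
  "inertia (parallel_child W) = (tt W + tq W)^2 * (ts W - tr W)^2
    + (tt W + tr W)^2 * (tq W - ts W)^2 + (tt W + ts W)^2 * (tr W - tq W)^2"
  unfolding parallel_child_def inertia_def TEC_def Let_def by simp algebra

theorem mainTheorem4:
  assumes "is_TEC W"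
  shows "inertia (serial_child W) + inertia (parallel_child W) \<le> inertia W"
proof -
  have "inertia (serial_child W) + inertia (parallel_child W)
      = ((tp W + tq W)^2 + (tt W + tq W)^2) * (ts W - tr W)^2
      + ((tp W + tr W)^2 + (tt W + tr W)^2) * (tq W - ts W)^2
      + ((tp W + ts W)^2 + (tt W + ts W)^2) * (tr W - tq W)^2"
    unfolding inertia_serial_child inertia_parallel_child by algebra
  also have "\<dots> \<le> (ts W - tr W)^2 + (tq W - ts W)^2 + (tr W - tq W)^2"
    using assms unfolding is_TEC_def by (intro children_inertia_sum_le) auto
  also have "\<dots> = inertia W"
    unfolding inertia_def by algebra
  finally show ?thesis .
qed

end
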